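(* Let $G=(V,E)$ be a connected, loopless and bridgeless graph with $n$ vertices and $m$ edges, and write $T(G;x,y)=\sum_{i,j}t_{i,j}x^iy^j$. Let $p(G)$ be the number of parallel classes and $p^*(G)$ the number of non-trivial parallel classes of $G$, and let $\Delta(\tilde G)$ be the number of triangles of $\tilde G$, the simple graph obtained from $G$ by replacing each parallel class by a single edge. Then \begin{enumerate} \item $t_{n-1,0}=1$; \item $t_{n-2,0}=p(G)-n+1$; \item $t_{n-3,0}=\binom{n-1}{2}-(n-2)\,p(G)+\binom{p(G)}{2}-\Delta(\tilde G)$; \item $t_{n-2,1}=p^*(G)$; \item $t_{n-3,1}=-p^*(G)(n-2)+\sum_{A}p(G/A)+\Delta(\tilde G)$, where the sum runs over all non-trivial parallel classes $A\subseteq E$ of $G$ and $G/A$ is the graph obtained by contracting all edges of $A$. \end{enumerate}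
   Context: Graphs are finite and may have parallel edges. The Tutte polynomial is $T(G;x,y)=\sum_{A\subseteq E}(x-1)^{\rho(E)-\rho(A)}(y-1)^{\gamma(A)}$, where for $A\subseteq E$, $c(A)$ is the number of connected components of the spanning subgraph $(V,A)$, $\rho(A)=|V|-c(A)$, $\gamma(A)=|A|-|V|+c(A)$. A parallel class of $G$ is a maximal subset of $E$ all of whose edges have the same pair of endvertices; parallel classes partition $E$. A parallel class is trivial if it has exactly one edge, non-trivial otherwise. *)

theory Defs
  imports "HOL-Computational_Algebra.Polynomial"
begin

text \<open>A finite multigraph is given by a vertex set V, an edge set E and a map
  ends assigning to each edge its set of endvertices (one vertex for a loop,
  two for an ordinary edge).\<close>

definition multigraph :: "'v set \<Rightarrow> 'e set \<Rightarrow> ('e \<Rightarrow> 'v set) \<Rightarrow> bool" where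
  "multigraph V E ends \<longleftrightarrow> finite V \<and> finite E \<and>
     (\<forall>e\<in>E. ends e \<subseteq> V \<and> (card (ends e) = 1 \<or> card (ends e) = 2))"

definition loopless :: "'e set \<Rightarrow> ('e \<Rightarrow> 'v set) \<Rightarrow> bool" where
  "loopless E ends \<longleftrightarrow> (\<forall>e\<in>E. card (ends e) = 2)"

definition conn_rel :: "'v set \<Rightarrow> 'e set \<Rightarrow> ('e \<Rightarrow> 'v set) \<Rightarrow> ('v \<times> 'v) set" where
  "conn_rel V A ends =
     (Id_on V \<union> {(u,w). \<exists>e\<in>A. u \<in> ends e \<and> w \<in> ends e})\<^sup>* \<inter> (V \<times> V)"

definition ncomp :: "'v set \<Rightarrow> 'e set \<Rightarrow> ('e \<Rightarrow> 'v set) \<Rightarrow> nat" where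
  "ncomp V A ends = card (V // conn_rel V A ends)"

definition connected_graph :: "'v set \<Rightarrow> 'e set \<Rightarrow> ('e \<Rightarrow> 'v set) \<Rightarrow> bool" where
  "connected_graph V E ends \<longleftrightarrow> V \<noteq> {} \<and> ncomp V E ends = 1"

definition bridgeless :: "'v set \<Rightarrow> 'e set \<Rightarrow> ('e \<Rightarrow> 'v set) \<Rightarrow> bool" where
  "bridgeless V E ends \<longleftrightarrow> (\<forall>e\<in>E. ncomp V (E - {e}) ends = ncomp V E ends)"

definition rank :: "'v set \<Rightarrow> 'e set \<Rightarrow> ('e \<Rightarrow> 'v set) \<Rightarrow> nat" where
  "rank V A ends = card V - ncomp V A ends"

definition nullity :: "'v set \<Rightarrow> 'e set \<Rightarrow> ('e \<Rightarrow> 'v set) \<Rightarrow> nat" where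
  "nullity V A ends = (card A + ncomp V A ends) - card V"

text \<open>Tutte polynomial as a polynomial in y whose coefficients are polynomials in x:
  (x-1) is the constant [:[:-1,1:]:], (y-1) is [:[:-1:], 1:].\<close>
definition tutte :: "'v set \<Rightarrow> 'e set \<Rightarrow> ('e \<Rightarrow> 'v set) \<Rightarrow> int poly poly" where
  "tutte V E ends = (\<Sum>A\<in>Pow E.
      [: [:-1, 1:] ^ (rank V E ends - rank V A ends) :] *
      [: [:-1:], 1 :] ^ (nullity V A ends))"

text \<open>t_{i,j}: coefficient of x^i y^j (zero for negative indices).\<close>
definition tcoeff :: "'v set \<Rightarrow> 'e set \<Rightarrow> ('e \<Rightarrow> 'v set) \<Rightarrow> int \<Rightarrow> int \<Rightarrow> int" where
  "tcoeff V E ends i j =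
     (if i < 0 \<or> j < 0 then 0 else coeff (coeff (tutte V E ends) (nat j)) (nat i))"

definition parallel_classes :: "'e set \<Rightarrow> ('e \<Rightarrow> 'v set) \<Rightarrow> 'e set set" where
  "parallel_classes E ends = (\<lambda>e. {f\<in>E. ends f = ends e}) ` E"

definition npar :: "'e set \<Rightarrow> ('e \<Rightarrow> 'v set) \<Rightarrow> nat" where
  "npar E ends = card (parallel_classes E ends)"

definition npar_nontriv :: "'e set \<Rightarrow> ('e \<Rightarrow> 'v set) \<Rightarrow> nat" where
  "npar_nontriv E ends = card {A \<in> parallel_classes E ends. card A \<ge> 2}"

definition ntriangles :: "'v set \<Rightarrow> 'e set \<Rightarrow> ('e \<Rightarrow> 'v set) \<Rightarrow> nat" where
  "ntriangles V E ends = card {S. S \<subseteq> V \<and> card S = 3 \<and>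
      (\<forall>u\<in>S. \<forall>w\<in>S. u \<noteq> w \<longrightarrow> {u, w} \<in> ends ` E)}"

text \<open>Contraction G/A of all edges of A: vertices are the components of (V,A),
  edges are E - A, with endpoints mapped to their components.\<close>
definition contract_V :: "'v set \<Rightarrow> 'e set \<Rightarrow> ('e \<Rightarrow> 'v set) \<Rightarrow> 'e set \<Rightarrow> 'v set set" where
  "contract_V V E ends A = V // conn_rel V A ends"

definition contract_E :: "'v set \<Rightarrow> 'e set \<Rightarrow> ('e \<Rightarrow> 'v set) \<Rightarrow> 'e set \<Rightarrow> 'e set" where
  "contract_E V E ends A = E - A"

definition contract_ends :: "'v set \<Rightarrow> 'e set \<Rightarrow> ('e \<Rightarrow> 'v set) \<Rightarrow> 'e set \<Rightarrow> 'e \<Rightarrow> 'v set set" where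
  "contract_ends V E ends A e = (\<lambda>w. conn_rel V A ends `` {w}) ` ends e"

end

theory Submission
  imports Defs
begin

text \<open>
  In \<open>T(G;x,y) = \<Sum>\<^sub>A (x-1)^(r(E)-r(A)) (y-1)^(|A|-r(A))\<close> the coefficient of
  \<open>x^(n-1-k) y^j\<close> only receives contributions from edge sets \<open>A\<close> of rank at most \<open>k\<close>.
  The rank of \<open>A\<close> depends only on its support, the set of vertex pairs spanned by its edges,
  and the supports of rank at most two are the empty set, one or two pairs, and triangles.
  Summing over all edge sets with a given support \<open>S\<close> amounts to choosing a nonempty subset of
  each parallel class in \<open>S\<close>, which gives \<open>\<Sum> (-1)^|A| = (-1)^|S|\<close> and
  \<open>\<Sum> (-1)^|A| |A| = (-1)^|S|\<close> times the number of trivial classes in \<open>S\<close>. What remains are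
  counts of pairs, multiple edges and triangles of the underlying simple graph. For the last
  formula, contracting the parallel class of \<open>{u, w}\<close> identifies \<open>{u, x}\<close> with \<open>{w, x}\<close>
  exactly for the common neighbours \<open>x\<close>, i.e. for the triangles through \<open>{u, w}\<close>.
\<close>

section \<open>Binomial coefficients and alternating sums\<close>

lemma coeff_linear_minus_one_power:
  "coeff ([:-1, 1:] ^ a) i = of_nat (a choose i) * (-1::'a::comm_ring_1) ^ (a - i)"
proof (cases "i \<le> a")
  case True
  then show ?thesis by (simp add: coeff_linear_poly_power)
next
  case False
  have "degree ([:-1, 1::'a:] ^ a) \<le> a"
    using degree_power_le[of "[:-1, 1::'a:]" a] by (simp add: degree_pCons_le order_trans)
  then show ?thesis using False by (simp add: coeff_eq_0 binomial_eq_0)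
qed

lemma coeff_coeff_tutte:
  "coeff (coeff (tutte V E ends) j) i =
     (\<Sum>A\<in>Pow E. int ((rank V E ends - rank V A ends) choose i)
                   * (-1) ^ (rank V E ends - rank V A ends - i)
                 * (int (nullity V A ends choose j) * (-1) ^ (nullity V A ends - j)))"
proof -
  have y: "[: [:-1:], 1 :] = [: -1, 1 :: int poly :]" by (simp add: one_pCons)
  have "coeff ([: [:-1:], 1 :] ^ b) j = [: int (b choose j) * (-1) ^ (b - j) :]" for b
    unfolding y coeff_linear_minus_one_power
    by (simp add: one_pCons of_nat_poly poly_const_pow flip: of_int_poly)
  then show ?thesis
    unfolding tutte_def by (simp add: coeff_sum coeff_linear_minus_one_power mult.commute)
qed

lemma choose_complement_shift:
  fixes a d k :: nat
  assumes "d \<le> a" "k \<le> a"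
  shows "int ((a - d) choose (a - k)) * (-1) ^ (a - d - (a - k)) =
           (if d \<le> k then int ((a - d) choose (k - d)) * (-1) ^ (k - d) else 0)"
proof (cases "d \<le> k")
  case True
  have e: "a - d - (a - k) = k - d" using assms True by linarith
  have "a - k \<le> a - d" using True by linarith
  then have "(a - d) choose (a - k) = (a - d) choose (k - d)"
    using binomial_symmetric e by metis
  then show ?thesis using True e by simp
next
  case False
  then show ?thesis using assms by (simp add: binomial_eq_0)
qed

lemma neg_one_power_diff: "d \<le> m \<Longrightarrow> (-1::int) ^ (m - d) = (-1) ^ m * (-1) ^ d"
proof -
  assume "d \<le> m"
  then have "(-1::int) ^ m = (-1) ^ (m - d) * (-1) ^ d" by (simp flip: power_add)
  then have "(-1::int) ^ m * (-1) ^ d = (-1) ^ (m - d) * ((-1) ^ d * (-1) ^ d)" by simp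
  also have "(-1::int) ^ d * (-1) ^ d = 1" by (simp flip: power_add add.commute mult_2)
  finally show ?thesis by simp
qed

lemma sum_Pow_neg_one_power_card:
  "finite C \<Longrightarrow> (\<Sum>B\<in>Pow C. (-1::int) ^ card B) = (if C = {} then 1 else 0)"
  using prod_diff_conv_sum[of C "\<lambda>_. 1::int" "\<lambda>_. 1"] by (simp add: power_0_left)

lemma sum_nonempty_subsets_neg_one_power_card:
  assumes "finite C" "C \<noteq> {}"
  shows "(\<Sum>B\<in>Pow C - {{}}. (-1::int) ^ card B) = -1"
  using assms sum_Pow_neg_one_power_card[of C] sum.remove[of "Pow C" "{}" "\<lambda>B. (-1::int) ^ card B"]
  by simp

lemma sum_Pow_neg_one_power_card_times_card:
  "finite C \<Longrightarrow> (\<Sum>B\<in>Pow C. (-1::int) ^ card B * int (card B)) = (if card C = 1 then -1 else 0)"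
proof (induction C rule: finite_induct)
  case empty
  then show ?case by simp
next
  case (insert x C)
  let ?f = "\<lambda>B. (-1::int) ^ card B * int (card B)"
  have "(\<Sum>B\<in>Pow (insert x C). ?f B) = (\<Sum>B\<in>Pow C. ?f B) + (\<Sum>B\<in>insert x ` Pow C. ?f B)"
    unfolding Pow_insert using insert.hyps by (intro sum.union_disjoint) auto
  also have "(\<Sum>B\<in>insert x ` Pow C. ?f B) = (\<Sum>B\<in>Pow C. ?f (insert x B))"
    using insert.hyps by (subst sum.reindex) (auto simp: inj_on_def)
  also have "\<dots> = (\<Sum>B\<in>Pow C. - ?f B - (-1::int) ^ card B)"
  proof (intro sum.cong refl)
    fix B assume "B \<in> Pow C"
    then have "x \<notin> B" "finite B" using insert.hyps finite_subset by auto
    then show "?f (insert x B) = - ?f B - (-1::int) ^ card B" by (simp add: algebra_simps)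
  qed
  finally show ?case
    using insert sum_Pow_neg_one_power_card[of C]
    by (simp add: sum_subtractf sum_negf card_insert_if)
qed

lemma sum_nonempty_subsets_neg_one_power_card_times_card:
  "finite C \<Longrightarrow> (\<Sum>B\<in>Pow C - {{}}. (-1::int) ^ card B * int (card B)) = (if card C = 1 then -1 else 0)"
  using sum_Pow_neg_one_power_card_times_card[of C]
    sum.remove[of "Pow C" "{}" "\<lambda>B. (-1::int) ^ card B * int (card B)"]
  by simp

lemma preimage_sets_insert:
  assumes "s \<notin> S"
  shows "{A. A \<subseteq> E \<and> f ` A = insert s S} =
     (\<lambda>(B, A). B \<union> A) ` ((Pow {e\<in>E. f e = s} - {{}}) \<times> {A. A \<subseteq> E \<and> f ` A = S})"
    (is "?L = (\<lambda>(B, A). B \<union> A) ` ?R")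
proof
  show "?L \<subseteq> (\<lambda>(B, A). B \<union> A) ` ?R"
  proof
    fix A assume "A \<in> ?L"
    then have AE: "A \<subseteq> E" and fA: "f ` A = insert s S" by auto
    let ?B = "A \<inter> {e. f e = s}"
    have "s \<in> f ` A" using fA by simp
    then have "?B \<noteq> {}" by blast
    moreover have "f ` (A - ?B) = f ` A - {s}" by blast
    ultimately have "(?B, A - ?B) \<in> ?R" using AE fA assms by auto
    then show "A \<in> (\<lambda>(B, A). B \<union> A) ` ?R" by (rule rev_image_eqI) auto
  qed
  show "(\<lambda>(B, A). B \<union> A) ` ?R \<subseteq> ?L"
  proof
    fix X assume "X \<in> (\<lambda>(B, A). B \<union> A) ` ?R"
    then obtain B A where X: "X = B \<union> A" "B \<subseteq> {e\<in>E. f e = s}" "B \<noteq> {}" "A \<subseteq> E" "f ` A = S"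
      by auto
    then have "f ` B = {s}" by auto
    then show "X \<in> ?L" using X by auto
  qed
qed

lemma inj_on_union_preimage_sets:
  assumes "s \<notin> S"
  shows "inj_on (\<lambda>(B, A). B \<union> A) ((Pow {e\<in>E. f e = s} - {{}}) \<times> {A. A \<subseteq> E \<and> f ` A = S})"
proof (rule inj_onI)
  fix x y
  assume x: "x \<in> (Pow {e\<in>E. f e = s} - {{}}) \<times> {A. A \<subseteq> E \<and> f ` A = S}"
    and y: "y \<in> (Pow {e\<in>E. f e = s} - {{}}) \<times> {A. A \<subseteq> E \<and> f ` A = S}"
    and eq: "(\<lambda>(B, A). B \<union> A) x = (\<lambda>(B, A). B \<union> A) y"
  obtain B A B' A' where xy: "x = (B, A)" "y = (B', A')" by fastforce
  have "A \<inter> {e. f e = s} = {}" "A' \<inter> {e. f e = s} = {}"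
    using assms x y xy by (auto simp: image_iff)
  moreover have "B \<subseteq> {e. f e = s}" "B' \<subseteq> {e. f e = s}" "B \<union> A = B' \<union> A'"
    using x y eq xy by auto
  ultimately have "B = B'" "A = A'" by blast+
  then show "x = y" using xy by simp
qed

lemma sum_preimage_sets_insert:
  assumes "s \<notin> S"
  shows "(\<Sum>A | A \<subseteq> E \<and> f ` A = insert s S. g A) =
           (\<Sum>(B, A) \<in> (Pow {e\<in>E. f e = s} - {{}}) \<times> {A. A \<subseteq> E \<and> f ` A = S}. g (B \<union> A))"
  unfolding preimage_sets_insert[OF assms]
  by (subst sum.reindex[OF inj_on_union_preimage_sets[OF assms]]) (simp add: case_prod_unfold)

lemma sum_preimage_sets_neg_one_power:
  assumes "finite E" "S \<subseteq> f ` E"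
  shows "(\<Sum>A | A \<subseteq> E \<and> f ` A = S. (-1::int) ^ card A) = (-1) ^ card S \<and>
         (\<Sum>A | A \<subseteq> E \<and> f ` A = S. (-1::int) ^ card A * int (card A)) =
           (-1) ^ card S * int (card {s\<in>S. card {e\<in>E. f e = s} = 1})"
proof -
  have "finite S" using assms finite_subset by blast
  then show ?thesis using assms(2)
  proof (induction S rule: finite_induct)
    case empty
    have "{A. A \<subseteq> E \<and> f ` A = {}} = {{}}" by auto
    then show ?case by simp
  next
    case (insert s S)
    let ?C = "{e\<in>E. f e = s}" and ?F = "{A. A \<subseteq> E \<and> f ` A = S}"
    have C: "finite ?C" "?C \<noteq> {}" using assms(1) insert.prems by auto
    have IH0: "(\<Sum>A\<in>?F. (-1::int) ^ card A) = (-1) ^ card S"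
      and IH1: "(\<Sum>A\<in>?F. (-1::int) ^ card A * int (card A)) =
                  (-1) ^ card S * int (card {s\<in>S. card {e\<in>E. f e = s} = 1})"
      using insert.IH insert.prems by auto
    have card_union: "card (B \<union> A) = card B + card A" if "B \<in> Pow ?C" "A \<in> ?F" for B A
    proof (rule card_Un_disjoint)
      show "finite B" "finite A" using that C(1) assms(1) by (auto intro: finite_subset)
      show "B \<inter> A = {}" using that insert.hyps(2) by auto
    qed
    have split: "(\<Sum>A | A \<subseteq> E \<and> f ` A = insert s S. g A) = (\<Sum>B\<in>Pow ?C - {{}}. \<Sum>A\<in>?F. g (B \<union> A))"
      for g :: "'a set \<Rightarrow> int"
      unfolding sum_preimage_sets_insert[OF insert.hyps(2)] by (simp add: sum.cartesian_product)
    have "(\<Sum>A | A \<subseteq> E \<and> f ` A = insert s S. (-1::int) ^ card A) =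
          (\<Sum>B\<in>Pow ?C - {{}}. (-1::int) ^ card B) * (\<Sum>A\<in>?F. (-1) ^ card A)"
      unfolding split sum_product by (intro sum.cong refl) (simp add: card_union power_add)
    moreover have "(\<Sum>A | A \<subseteq> E \<and> f ` A = insert s S. (-1::int) ^ card A * int (card A)) =
          (\<Sum>B\<in>Pow ?C - {{}}. (-1::int) ^ card B * int (card B)) * (\<Sum>A\<in>?F. (-1) ^ card A)
        + (\<Sum>B\<in>Pow ?C - {{}}. (-1::int) ^ card B) * (\<Sum>A\<in>?F. (-1) ^ card A * int (card A))"
      unfolding split sum_product sum.distrib[symmetric]
      by (intro sum.cong refl) (simp add: card_union power_add algebra_simps)
    moreover have "card {t \<in> insert s S. card {e\<in>E. f e = t} = 1} =
        card {t \<in> S. card {e\<in>E. f e = t} = 1} + (if card ?C = 1 then 1 else 0)"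
    proof -
      have "{t \<in> insert s S. card {e\<in>E. f e = t} = 1} = (if card ?C = 1
              then insert s {t \<in> S. card {e\<in>E. f e = t} = 1} else {t \<in> S. card {e\<in>E. f e = t} = 1})"
        by auto
      then show ?thesis using insert.hyps by simp
    qed
    ultimately show ?case
      using insert.hyps IH0 IH1 C sum_nonempty_subsets_neg_one_power_card[of ?C]
        sum_nonempty_subsets_neg_one_power_card_times_card[of ?C]
      by (simp add: algebra_simps)
  qed
qed

lemma sum_card_Int_eq_sum_card_containing:
  assumes "finite F" "finite N"
  shows "(\<Sum>S\<in>F. card (S \<inter> N)) = (\<Sum>s\<in>N. card {S\<in>F. s \<in> S})"
proof -
  have "(\<Sum>S\<in>F. card (S \<inter> N)) = (\<Sum>S\<in>F. \<Sum>s\<in>N. if s \<in> S then 1 else 0)"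
  proof (intro sum.cong refl)
    fix S
    have "S \<inter> N = {s\<in>N. s \<in> S}" by auto
    then show "card (S \<inter> N) = (\<Sum>s\<in>N. if s \<in> S then 1 else 0)"
      using sum.inter_filter[OF assms(2), of "\<lambda>_. 1::nat" "\<lambda>s. s \<in> S"] by simp
  qed
  also have "\<dots> = (\<Sum>s\<in>N. \<Sum>S\<in>F. if s \<in> S then 1 else 0)" by (rule sum.swap)
  also have "\<dots> = (\<Sum>s\<in>N. card {S\<in>F. s \<in> S})"
    using sum.inter_filter[OF assms(1), of "\<lambda>_. 1::nat"] by simp
  finally show ?thesis .
qed

section \<open>Connectivity of graphs given by vertex pairs\<close>

lemma conn_rel_ends_image: "conn_rel V A ends = conn_rel V (ends ` A) id"
  unfolding conn_rel_def by (intro arg_cong2[where f="(\<inter>)"] arg_cong[where f=rtrancl] refl) auto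

lemma ncomp_ends_image: "ncomp V A ends = ncomp V (ends ` A) id"
  unfolding ncomp_def by (subst conn_rel_ends_image) (rule refl)

lemma conn_rel_closed:
  assumes "(x, y) \<in> conn_rel V S id" "x \<in> X" "\<And>s. s \<in> S \<Longrightarrow> s \<inter> X \<noteq> {} \<Longrightarrow> s \<subseteq> X"
  shows "y \<in> X"
proof -
  have "(x, y) \<in> (Id_on V \<union> {(u, w). \<exists>e\<in>S. u \<in> id e \<and> w \<in> id e})\<^sup>*"
    using assms(1) unfolding conn_rel_def by auto
  then show ?thesis
  proof (induction rule: rtrancl_induct)
    case base
    then show ?case using assms(2) .
  next
    case (step y z)
    then show ?case using assms(3) by (auto simp: Id_on_def)
  qed
qed

lemma equiv_conn_rel:
  assumes "\<And>s. s \<in> S \<Longrightarrow> s \<subseteq> V"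
  shows "equiv V (conn_rel V S id)"
proof -
  let ?R = "Id_on V \<union> {(u, w). \<exists>e\<in>S. u \<in> id e \<and> w \<in> id e}"
  have sym: "sym (?R\<^sup>*)" by (rule sym_rtrancl) (auto simp: sym_def Id_on_def)
  show ?thesis
    unfolding equiv_def conn_rel_def
  proof (intro conjI)
    show "refl_on V (?R\<^sup>* \<inter> V \<times> V)" by (auto simp: refl_on_def)
    show "?R\<^sup>* \<inter> V \<times> V \<subseteq> V \<times> V" by auto
    show "sym (?R\<^sup>* \<inter> V \<times> V)" using sym by (auto simp: sym_def)
    show "trans (?R\<^sup>* \<inter> V \<times> V)" by (auto simp: trans_def)
  qed
qed

lemma conn_rel_edge:
  assumes "s \<in> S" "x \<in> s" "y \<in> s" "s \<subseteq> V"
  shows "(x, y) \<in> conn_rel V S id"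
  using assms unfolding conn_rel_def by auto

definition doubletons :: "'a set \<Rightarrow> 'a set set" where
  "doubletons X = {t. t \<subseteq> X \<and> card t = 2}"

lemma card_doubletons: "finite X \<Longrightarrow> card (doubletons X) = card X choose 2"
  unfolding doubletons_def by (rule n_subsets)

lemma Union_doubletons: "2 \<le> card X \<Longrightarrow> \<Union>(doubletons X) = X"
proof
  show "\<Union>(doubletons X) \<subseteq> X" unfolding doubletons_def by auto
  assume X: "2 \<le> card X"
  show "X \<subseteq> \<Union>(doubletons X)"
  proof
    fix x assume x: "x \<in> X"
    have "X \<noteq> {x}" using X by auto
    then obtain y where "y \<in> X" "y \<noteq> x" using x by blast
    then have "{x, y} \<in> doubletons X" unfolding doubletons_def using x by auto
    then show "x \<in> \<Union>(doubletons X)" by blast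
  qed
qed

lemma npar_eq_card_image: "finite A \<Longrightarrow> npar A f = card (f ` A)"
proof -
  assume "finite A"
  let ?C = "\<lambda>v. {g\<in>A. f g = v}"
  have "parallel_classes A f = ?C ` (f ` A)" unfolding parallel_classes_def by auto
  moreover have "inj_on ?C (f ` A)" by (rule inj_onI) blast
  ultimately show ?thesis unfolding npar_def by (simp add: card_image)
qed

definition le_two_edges_or_triangle :: "'v set set \<Rightarrow> bool" where
  "le_two_edges_or_triangle S \<longleftrightarrow> card S \<le> 2 \<or> (card S = 3 \<and> card (\<Union>S) = 3)"

locale pair_graph =
  fixes V :: "'v set" and S :: "'v set set"
  assumes finite_V: "finite V" and edge_two_subset: "\<And>s. s \<in> S \<Longrightarrow> s \<subseteq> V \<and> card s = 2"
begin

abbreviation "R \<equiv> conn_rel V S id"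
abbreviation "W \<equiv> \<Union>S"

lemma equiv_R: "equiv V R"
  using edge_two_subset by (intro equiv_conn_rel) auto

lemma W_subset_V: "W \<subseteq> V"
  using edge_two_subset by auto

lemma finite_W: "finite W"
  using W_subset_V finite_V finite_subset by blast

lemma finite_S: "finite S"
  using finite_W by (rule finite_UnionD)

lemma card_W_le: "card W \<le> card V"
  using W_subset_V finite_V card_mono by blast

lemma class_uncovered:
  assumes "x \<in> V - W"
  shows "R `` {x} = {x}"
proof
  show "R `` {x} \<subseteq> {x}"
  proof
    fix y assume "y \<in> R `` {x}"
    moreover have "s \<subseteq> {x}" if "s \<in> S" "s \<inter> {x} \<noteq> {}" for s using that assms by auto
    ultimately show "y \<in> {x}" using conn_rel_closed[of x y V S "{x}"] by blast
  qed
  show "{x} \<subseteq> R `` {x}" using assms equiv_R by (auto simp: equiv_def refl_on_def)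
qed

lemma class_covered:
  assumes "x \<in> W"
  shows "R `` {x} \<subseteq> W"
proof
  fix y assume "y \<in> R `` {x}"
  then show "y \<in> W" using conn_rel_closed[of x y V S W] assms by blast
qed

lemma covered_class_subset: "X \<in> W // R \<Longrightarrow> X \<subseteq> W"
  unfolding quotient_def using class_covered by auto

lemma finite_covered_classes: "finite (W // R)"
proof -
  have "W // R = (\<lambda>x. R `` {x}) ` W" unfolding quotient_def by auto
  then show ?thesis using finite_W by simp
qed

lemma edge_subset_class:
  assumes "s \<in> S" "x \<in> s"
  shows "s \<subseteq> R `` {x}"
proof
  fix y assume "y \<in> s"
  then show "y \<in> R `` {x}" using conn_rel_edge[of s S x y V] assms edge_two_subset by simp
qed

lemma edge_subset_covered_class: assumes "s \<in> S" shows "\<exists>X\<in>W // R. s \<subseteq> X"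
proof -
  obtain x where "x \<in> s" using edge_two_subset[OF assms] by fastforce
  then show ?thesis using assms edge_subset_class unfolding quotient_def by blast
qed

lemma covered_class_card: assumes "X \<in> W // R" shows "finite X" "2 \<le> card X"
proof -
  show fin: "finite X" using covered_class_subset[OF assms] finite_W finite_subset by blast
  obtain x s where "s \<in> S" "x \<in> s" "X = R `` {x}" using assms unfolding quotient_def by auto
  then have "s \<subseteq> X" "card s = 2" using edge_subset_class edge_two_subset by auto
  then show "2 \<le> card X" using fin card_mono by metis
qed

lemma card_W_eq_sum_classes: "card W = (\<Sum>X\<in>W // R. card X)"
proof -
  have "W \<subseteq> \<Union>(W // R)"
  proof
    fix x assume "x \<in> W"
    then have "x \<in> R `` {x}" "R `` {x} \<in> W // R"
      using equiv_R W_subset_V by (auto simp: equiv_def refl_on_def intro: quotientI)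
    then show "x \<in> \<Union>(W // R)" by blast
  qed
  then have "\<Union>(W // R) = W" using covered_class_subset by blast
  moreover have "W // R \<subseteq> V // R" using W_subset_V unfolding quotient_def by blast
  then have "pairwise disjnt (W // R)"
    using quotient_disj[OF equiv_R] unfolding pairwise_def disjnt_def by blast
  ultimately show ?thesis
    using card_Union_disjoint[of "W // R"] covered_class_card(1) by simp
qed

lemma two_mult_card_classes_le: "2 * card (W // R) \<le> card W"
proof -
  have "2 * card (W // R) = (\<Sum>X\<in>W // R. 2)" by simp
  also have "\<dots> \<le> (\<Sum>X\<in>W // R. card X)" by (intro sum_mono covered_class_card(2))
  finally show ?thesis using card_W_eq_sum_classes by simp
qed

lemma covered_classes_nonempty: "W \<noteq> {} \<Longrightarrow> 1 \<le> card (W // R)"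
  using finite_covered_classes by (auto simp: quotient_def card_gt_0_iff[symmetric] Suc_le_eq)

lemma ncomp_pair_graph: "ncomp V S id = card V - card W + card (W // R)"
proof -
  have "V = (V - W) \<union> W" using W_subset_V by auto
  then have "V // R = (V - W) // R \<union> W // R" unfolding quotient_def by blast
  also have "(V - W) // R = (\<lambda>x. {x}) ` (V - W)"
    unfolding quotient_def using class_uncovered by auto
  finally have "V // R = (\<lambda>x. {x}) ` (V - W) \<union> W // R" .
  moreover have "(\<lambda>x. {x}) ` (V - W) \<inter> W // R = {}"
    using covered_class_subset by auto
  moreover have "card ((\<lambda>x. {x}) ` (V - W)) = card V - card W"
    using card_image[of "\<lambda>x. {x}" "V - W"] finite_W W_subset_V by (simp add: card_Diff_subset)
  ultimately show ?thesis
    unfolding ncomp_def using finite_V finite_covered_classes by (simp add: card_Un_disjoint)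
qed

lemma one_le_ncomp: "V \<noteq> {} \<Longrightarrow> 1 \<le> ncomp V S id"
proof (cases "W = {}")
  case True
  assume "V \<noteq> {}"
  moreover have "card W = 0" by (simp only: True card.empty)
  ultimately show ?thesis using ncomp_pair_graph finite_V by (simp add: Suc_le_eq card_gt_0_iff)
next
  case False
  then show ?thesis using ncomp_pair_graph covered_classes_nonempty card_W_le by simp
qed

lemma ncomp_le_card_V: "ncomp V S id \<le> card V"
  using ncomp_pair_graph two_mult_card_classes_le card_W_le by linarith

lemma rank_pair_graph: "rank V S id = card W - card (W // R)"
  unfolding rank_def ncomp_pair_graph using two_mult_card_classes_le card_W_le by linarith

lemma card_S_le: "card S \<le> card W choose 2"
proof -
  have "S \<subseteq> {t. t \<subseteq> W \<and> card t = 2}" using edge_two_subset by auto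
  then have "card S \<le> card {t. t \<subseteq> W \<and> card t = 2}" using finite_W by (intro card_mono) auto
  then show ?thesis using n_subsets[OF finite_W] by simp
qed

lemma card_classes_eq_1:
  assumes "card W \<in> {2, 3}"
  shows "card (W // R) = 1"
proof -
  have "W \<noteq> {}" using assms by (metis card.empty empty_iff insertE zero_neq_numeral)
  then show ?thesis using covered_classes_nonempty two_mult_card_classes_le assms by auto
qed

lemma rank_empty: "S = {} \<Longrightarrow> rank V S id = 0"
  using rank_pair_graph by simp

lemma rank_single: "card S = 1 \<Longrightarrow> rank V S id = 1"
proof -
  assume "card S = 1"
  then obtain s where "S = {s}" by (rule card_1_singletonE)
  then have "card W = 2" using edge_two_subset by simp
  then show ?thesis using card_classes_eq_1 rank_pair_graph by simp
qed

lemma rank_card_W_3: "card W = 3 \<Longrightarrow> rank V S id = 2"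
  using card_classes_eq_1 rank_pair_graph by simp

lemma isolated_edge_class:
  assumes "s \<in> S" "\<And>t. t \<in> S \<Longrightarrow> t \<noteq> s \<Longrightarrow> t \<inter> s = {}" "x \<in> s"
  shows "R `` {x} = s"
proof
  show "s \<subseteq> R `` {x}" using edge_subset_class assms by blast
  show "R `` {x} \<subseteq> s"
  proof
    fix y assume "y \<in> R `` {x}"
    moreover have "t \<subseteq> s" if "t \<in> S" "t \<inter> s \<noteq> {}" for t using that assms(2) by blast
    ultimately show "y \<in> s" using conn_rel_closed[of x y V S s] assms(3) by blast
  qed
qed

lemma rank_two: assumes "card S = 2" shows "rank V S id = 2"
proof -
  obtain s t where st: "S = {s, t}" "s \<noteq> t" using assms card_2_iff by metis
  have "card s = 2" "card t = 2" "s \<subseteq> V" "t \<subseteq> V" using edge_two_subset st by auto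
  then have s2: "card s = 2" "card t = 2" "finite s" "finite t"
    using finite_subset[OF _ finite_V] by auto
  have W: "W = s \<union> t" using st by auto
  have "s \<inter> t \<noteq> s"
  proof
    assume "s \<inter> t = s"
    then have "s \<subseteq> t" by blast
    then have "s = t" using card_subset_eq[OF s2(4)] s2 by simp
    then show False using st(2) by simp
  qed
  then have "s \<inter> t \<subset> s" by blast
  then have "card (s \<inter> t) < 2" using psubset_card_mono[OF s2(3)] s2 by simp
  moreover have "card W + card (s \<inter> t) = 4" using card_Un_Int[OF s2(3,4)] s2 W by simp
  ultimately have "card W = 3 \<or> card W = 4 \<and> card (s \<inter> t) = 0" by linarith
  then consider "card W = 3" | "card W = 4" "s \<inter> t = {}" using s2(3) by auto
  then show ?thesis
  proof cases
    case 1
    then show ?thesis by (rule rank_card_W_3)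
  next
    case 2
    obtain a b where "a \<in> s" "b \<in> t" using s2 by fastforce
    then have "R `` {a} = s" "R `` {b} = t"
      using isolated_edge_class[of s a] isolated_edge_class[of t b] st 2(2) by auto
    moreover have "a \<in> W" "b \<in> W" using \<open>a \<in> s\<close> \<open>b \<in> t\<close> W by auto
    ultimately have "{s, t} \<subseteq> W // R" by (auto intro: quotientI)
    then have "card {s, t} \<le> card (W // R)" by (rule card_mono[OF finite_covered_classes])
    then have "2 \<le> card (W // R)" using st(2) by simp
    then show ?thesis using two_mult_card_classes_le 2(1) rank_pair_graph by simp
  qed
qed

lemma card_S_le_2_if_four_vertices_two_classes:
  assumes "card W = 4" "card (W // R) = 2"
  shows "card S \<le> 2"
proof -
  have card_class: "card X = 2" if X: "X \<in> W // R" for X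
  proof -
    have "card W = card X + (\<Sum>Y\<in>W // R - {X}. card Y)"
      using card_W_eq_sum_classes sum.remove[OF finite_covered_classes X] by simp
    moreover have "(\<Sum>Y\<in>W // R - {X}. 2) \<le> (\<Sum>Y\<in>W // R - {X}. card Y)"
      by (intro sum_mono covered_class_card(2)) auto
    moreover have "card (W // R - {X}) = 1" using assms(2) X finite_covered_classes by simp
    ultimately show ?thesis using assms(1) covered_class_card(2)[OF X] by simp
  qed
  have "S \<subseteq> W // R"
  proof
    fix s assume s: "s \<in> S"
    then obtain X where X: "X \<in> W // R" "s \<subseteq> X" using edge_subset_covered_class by blast
    then have "s = X"
      using card_class[OF X(1)] edge_two_subset[OF s] covered_class_card(1)[OF X(1)] card_subset_eq
      by metis
    then show "s \<in> W // R" using X by simp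
  qed
  then show ?thesis using card_mono[OF finite_covered_classes] assms(2) by fastforce
qed

lemma three_le_rank:
  assumes "\<not> le_two_edges_or_triangle S"
  shows "3 \<le> rank V S id"
proof -
  have S: "3 \<le> card S" "\<not> (card S = 3 \<and> card W = 3)"
    using assms unfolding le_two_edges_or_triangle_def by auto
  have "card W \<ge> 4"
  proof (rule ccontr)
    assume "\<not> 4 \<le> card W"
    then have "card W = 0 \<or> card W = 1 \<or> card W = 2 \<or> card W = 3" by arith
    then have "card W choose 2 \<le> 1 \<or> card W = 3 \<and> card W choose 2 = 3"
      by (auto simp: binomial_eq_0 choose_two)
    then show False using card_S_le S by linarith
  qed
  then consider "card W = 4" | "5 \<le> card W" by linarith
  then show ?thesis
  proof cases
    case 1
    have "W \<noteq> {}" using 1 by (metis card.empty zero_neq_numeral)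
    then have "card (W // R) = 1"
      using covered_classes_nonempty two_mult_card_classes_le 1
        card_S_le_2_if_four_vertices_two_classes S(1) by fastforce
    then show ?thesis using 1 rank_pair_graph by simp
  next
    case 2
    then show ?thesis using rank_pair_graph two_mult_card_classes_le by linarith
  qed
qed

lemma rank_le_two_edges_or_triangle:
  assumes "le_two_edges_or_triangle S"
  shows "rank V S id = min (card S) 2"
  using assms finite_S rank_empty rank_single rank_two rank_card_W_3
  unfolding le_two_edges_or_triangle_def by (auto simp: le_Suc_eq numeral_2_eq_2)

end

section \<open>Coefficients of the Tutte polynomial via supports\<close>

locale loopless_connected_multigraph =
  fixes V :: "'v set" and E :: "'e set" and ends :: "'e \<Rightarrow> 'v set"
  assumes multigraph: "multigraph V E ends"
    and connected: "connected_graph V E ends"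
    and loopless: "loopless E ends"
begin

lemma finite_V: "finite V" and finite_E: "finite E"
  using multigraph by (auto simp: multigraph_def)

lemma ends_two_subset: "e \<in> E \<Longrightarrow> ends e \<subseteq> V \<and> card (ends e) = 2"
  using multigraph loopless by (auto simp: multigraph_def loopless_def)

lemma V_nonempty: "V \<noteq> {}" and ncomp_E: "ncomp V E ends = 1"
  using connected by (auto simp: connected_graph_def)

lemma card_V_pos: "0 < card V"
  using finite_V V_nonempty by (simp add: card_gt_0_iff)

definition simple_edges :: "'v set set" where
  "simple_edges = ends ` E"

definition parallel_class :: "'v set \<Rightarrow> 'e set" where
  "parallel_class s = {e\<in>E. ends e = s}"

definition multi_edges :: "'v set set" where
  "multi_edges = {s\<in>simple_edges. 2 \<le> card (parallel_class s)}"

abbreviation edge_sets_over :: "'v set set \<Rightarrow> 'e set set" where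
  "edge_sets_over S \<equiv> {A. A \<subseteq> E \<and> ends ` A = S}"

lemma finite_simple_edges: "finite simple_edges"
  unfolding simple_edges_def using finite_E by simp

lemma simple_edge_two_subset: "s \<in> simple_edges \<Longrightarrow> s \<subseteq> V \<and> card s = 2"
  unfolding simple_edges_def using ends_two_subset by auto

lemma pair_graph_subset: "S \<subseteq> simple_edges \<Longrightarrow> pair_graph V S"
  unfolding pair_graph_def using finite_V simple_edge_two_subset by auto

lemma rank_ends_image: "rank V A ends = rank V (ends ` A) id"
  unfolding rank_def using ncomp_ends_image[of V A ends] by simp

lemma rank_le: "A \<subseteq> E \<Longrightarrow> rank V A ends \<le> card V - 1"
  using pair_graph.one_le_ncomp[OF pair_graph_subset V_nonempty, of "ends ` A"]
  unfolding rank_def simple_edges_def ncomp_ends_image[of V A ends] by (simp add: image_mono)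

text \<open>\<open>x_coeff k d\<close> is the coefficient of \<open>x ^ (card V - 1 - k)\<close> in \<open>(x - 1) ^ (card V - 1 - d)\<close>,
  and \<open>term_coeff k j A\<close> that of \<open>x ^ (card V - 1 - k) * y ^ j\<close> in the summand of \<open>A\<close>.\<close>

definition x_coeff :: "nat \<Rightarrow> nat \<Rightarrow> int" where
  "x_coeff k d = (if d \<le> k then int ((card V - 1 - d) choose (k - d)) * (-1) ^ (k - d) else 0)"

definition term_coeff :: "nat \<Rightarrow> nat \<Rightarrow> 'e set \<Rightarrow> int" where
  "term_coeff k j A = x_coeff k (rank V A ends) *
     (int (nullity V A ends choose j) * (-1) ^ (nullity V A ends - j))"

lemma tcoeff_eq_sum_term_coeff:
  "tcoeff V E ends (int (card V) - 1 - int k) (int j) = (\<Sum>A\<in>Pow E. term_coeff k j A)"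
proof (cases "card V \<le> k")
  case True
  have "term_coeff k j A = 0" if "A \<in> Pow E" for A
    using rank_le[of A] that True card_V_pos by (auto simp: term_coeff_def x_coeff_def binomial_eq_0)
  then have "(\<Sum>A\<in>Pow E. term_coeff k j A) = 0" by (rule sum.neutral[rule_format])
  moreover have "tcoeff V E ends (int (card V) - 1 - int k) (int j) = 0"
    using True card_V_pos by (simp add: tcoeff_def)
  ultimately show ?thesis by simp
next
  case False
  have rank_E: "rank V E ends = card V - 1" unfolding rank_def using ncomp_E by simp
  have "tcoeff V E ends (int (card V) - 1 - int k) (int j) =
          coeff (coeff (tutte V E ends) j) (card V - 1 - k)"
    using False by (simp add: tcoeff_def nat_diff_distrib)
  also have "\<dots> = (\<Sum>A\<in>Pow E. term_coeff k j A)"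
    unfolding coeff_coeff_tutte rank_E
  proof (intro sum.cong refl)
    fix A assume "A \<in> Pow E"
    then have "int ((card V - 1 - rank V A ends) choose (card V - 1 - k))
          * (-1) ^ (card V - 1 - rank V A ends - (card V - 1 - k)) = x_coeff k (rank V A ends)"
      unfolding x_coeff_def using rank_le[of A] False by (intro choose_complement_shift) auto
    then show "int ((card V - 1 - rank V A ends) choose (card V - 1 - k))
          * (-1) ^ (card V - 1 - rank V A ends - (card V - 1 - k))
          * (int (nullity V A ends choose j) * (-1) ^ (nullity V A ends - j)) = term_coeff k j A"
      unfolding term_coeff_def by simp
  qed
  finally show ?thesis .
qed

lemma sum_Pow_E_by_supports:
  "(\<Sum>A\<in>Pow E. f A) = (\<Sum>S\<in>Pow simple_edges. \<Sum>A\<in>edge_sets_over S. f A)"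
proof -
  have "(\<Sum>S\<in>Pow simple_edges. \<Sum>A\<in>{A\<in>Pow E. ends ` A = S}. f A) = (\<Sum>A\<in>Pow E. f A)"
    using finite_E finite_simple_edges unfolding simple_edges_def by (intro sum.group) auto
  moreover have "{A\<in>Pow E. ends ` A = S} = edge_sets_over S" for S by auto
  ultimately show ?thesis by simp
qed

lemma sum_edge_sets_over_neg_one_power:
  assumes "S \<subseteq> simple_edges"
  shows "(\<Sum>A\<in>edge_sets_over S. (-1::int) ^ card A) = (-1) ^ card S"
    and "(\<Sum>A\<in>edge_sets_over S. (-1::int) ^ card A * int (card A)) =
           (-1) ^ card S * int (card (S - multi_edges))"
proof -
  have "{s\<in>S. card {e\<in>E. ends e = s} = 1} = S - multi_edges"
  proof -
    have "card (parallel_class s) \<noteq> 0" if "s \<in> S" for s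
      using that assms finite_E unfolding simple_edges_def parallel_class_def by auto
    then show ?thesis unfolding multi_edges_def parallel_class_def using assms by fastforce
  qed
  then show "(\<Sum>A\<in>edge_sets_over S. (-1::int) ^ card A) = (-1) ^ card S"
    and "(\<Sum>A\<in>edge_sets_over S. (-1::int) ^ card A * int (card A)) =
           (-1) ^ card S * int (card (S - multi_edges))"
    using sum_preimage_sets_neg_one_power[OF finite_E, of S ends] assms
    unfolding simple_edges_def by simp_all
qed

lemma rank_edge_sets_over: "A \<in> edge_sets_over S \<Longrightarrow> rank V A ends = rank V S id"
  using rank_ends_image by auto

lemma card_le_card_edge_sets_over: "A \<in> edge_sets_over S \<Longrightarrow> card S \<le> card A"
  using card_image_le finite_subset[OF _ finite_E] by blast

lemma nullity_eq_card_minus_rank: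
  assumes "A \<subseteq> E" "rank V A ends \<le> card A"
  shows "nullity V A ends = card A - rank V A ends"
  using pair_graph.ncomp_le_card_V[OF pair_graph_subset, of "ends ` A"] assms
  unfolding nullity_def rank_def simple_edges_def ncomp_ends_image[of V A ends]
  by (simp add: image_mono)

text \<open>For a support \<open>S\<close> of rank \<open>r = min (card S) 2\<close>, every edge set over \<open>S\<close> has nullity
  \<open>card A - r\<close>; this is their contribution to the coefficient of \<open>y ^ j\<close>.\<close>

definition nullity_sum :: "nat \<Rightarrow> 'v set set \<Rightarrow> int" where
  "nullity_sum j S = (\<Sum>A\<in>edge_sets_over S.
     int ((card A - min (card S) 2) choose j) * (-1) ^ (card A - min (card S) 2 - j))"

lemma nullity_sum_0:
  assumes "S \<subseteq> simple_edges"
  shows "nullity_sum 0 S = (-1) ^ (card S - min (card S) 2)"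
proof -
  let ?r = "min (card S) 2"
  have "nullity_sum 0 S = (\<Sum>A\<in>edge_sets_over S. (-1) ^ ?r * (-1::int) ^ card A)"
    unfolding nullity_sum_def
  proof (intro sum.cong refl)
    fix A assume "A \<in> edge_sets_over S"
    then have "card S \<le> card A" by (rule card_le_card_edge_sets_over)
    then have "?r \<le> card A" by simp
    then show "int ((card A - ?r) choose 0) * (-1) ^ (card A - ?r - 0) = (-1) ^ ?r * (-1) ^ card A"
      using neg_one_power_diff[of ?r "card A"] by simp
  qed
  also have "\<dots> = (-1) ^ ?r * (-1) ^ card S"
    unfolding sum_distrib_left[symmetric] sum_edge_sets_over_neg_one_power(1)[OF assms] ..
  also have "\<dots> = (-1) ^ (card S - ?r)" using neg_one_power_diff[of ?r "card S"] by simp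
  finally show ?thesis .
qed

lemma nullity_sum_1:
  assumes "S \<subseteq> simple_edges"
  shows "nullity_sum 1 S = (-1) ^ (card S - min (card S) 2)
           * (int (card (S \<inter> multi_edges)) + int (min (card S) 2) - int (card S))"
proof -
  let ?r = "min (card S) 2"
  have "finite S" using assms finite_simple_edges finite_subset by blast
  have "nullity_sum 1 S = (\<Sum>A\<in>edge_sets_over S.
          - ((-1) ^ ?r * ((-1::int) ^ card A * int (card A))) + (-1) ^ ?r * int ?r * (-1) ^ card A)"
    unfolding nullity_sum_def
  proof (intro sum.cong refl)
    fix A assume "A \<in> edge_sets_over S"
    then have "card S \<le> card A" by (rule card_le_card_edge_sets_over)
    then have r: "?r \<le> card A" by simp
    have "int (card A - ?r) * (-1::int) ^ (card A - ?r - 1) =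
          - (int (card A - ?r) * (-1) ^ (card A - ?r))"
      by (cases "card A - ?r") simp_all
    then have "int (card A - ?r) * (-1::int) ^ (card A - ?r - 1) =
               - (int (card A - ?r) * ((-1) ^ card A * (-1) ^ ?r))"
      unfolding neg_one_power_diff[OF r] .
    then show "int ((card A - ?r) choose 1) * (-1) ^ (card A - ?r - 1) =
        - ((-1) ^ ?r * ((-1::int) ^ card A * int (card A))) + (-1) ^ ?r * int ?r * (-1) ^ card A"
      unfolding choose_one of_nat_diff[OF r] by (simp add: algebra_simps)
  qed
  also have "\<dots> = - ((-1) ^ ?r * ((-1) ^ card S * int (card (S - multi_edges))))
                  + (-1) ^ ?r * int ?r * (-1) ^ card S"
    by (simp only: sum.distrib sum_negf sum_distrib_left[symmetric]
        sum_edge_sets_over_neg_one_power[OF assms])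
  also have "card (S - multi_edges) = card S - card (S \<inter> multi_edges)"
    using \<open>finite S\<close> by (simp add: card_Diff_subset_Int)
  finally show ?thesis
    unfolding neg_one_power_diff[of ?r "card S", OF min.cobounded1]
    using card_mono[OF \<open>finite S\<close>, of "S \<inter> multi_edges"] by (simp add: algebra_simps)
qed

lemma sum_term_coeff_edge_sets_over:
  assumes S: "S \<subseteq> simple_edges" and k: "k \<le> 2"
  shows "(\<Sum>A\<in>edge_sets_over S. term_coeff k j A) =
           (if le_two_edges_or_triangle S then x_coeff k (min (card S) 2) * nullity_sum j S else 0)"
proof -
  interpret pair_graph V S by (rule pair_graph_subset[OF S])
  show ?thesis
  proof (cases "le_two_edges_or_triangle S")
    case False
    have "term_coeff k j A = 0" if "A \<in> edge_sets_over S" for A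
      using three_le_rank[OF False] rank_edge_sets_over[OF that] k
      by (simp add: term_coeff_def x_coeff_def)
    then show ?thesis using False by simp
  next
    case True
    let ?r = "min (card S) 2"
    have "term_coeff k j A =
          x_coeff k ?r * (int ((card A - ?r) choose j) * (-1) ^ (card A - ?r - j))"
      if A: "A \<in> edge_sets_over S" for A
    proof -
      have "rank V A ends = ?r"
        using rank_edge_sets_over[OF A] rank_le_two_edges_or_triangle[OF True] by simp
      moreover have "?r \<le> card A" using card_le_card_edge_sets_over[OF A] by simp
      ultimately show ?thesis
        using nullity_eq_card_minus_rank[of A] A by (simp add: term_coeff_def)
    qed
    then show ?thesis using True by (simp add: nullity_sum_def sum_distrib_left)
  qed
qed

definition edge_pairs :: "'v set set set" where
  "edge_pairs = {S. S \<subseteq> simple_edges \<and> card S = 2}"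

definition triangle_edge_sets :: "'v set set set" where
  "triangle_edge_sets = {S. S \<subseteq> simple_edges \<and> card S = 3 \<and> card (\<Union>S) = 3}"

lemma low_rank_supports:
  "{S\<in>Pow simple_edges. le_two_edges_or_triangle S} =
     {{}} \<union> (\<lambda>s. {s}) ` simple_edges \<union> edge_pairs \<union> triangle_edge_sets"
proof -
  have "card S \<le> 2 \<longleftrightarrow> S = {} \<or> (\<exists>s. S = {s}) \<or> card S = 2" if "S \<subseteq> simple_edges" for S
  proof -
    have "finite S" using that finite_simple_edges finite_subset by blast
    then show ?thesis by (auto simp: le_Suc_eq numeral_2_eq_2 card_1_singleton_iff)
  qed
  then show ?thesis
    unfolding le_two_edges_or_triangle_def edge_pairs_def triangle_edge_sets_def by auto
qed

lemma tcoeff_expansion: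
  assumes "k \<le> 2"
  shows "tcoeff V E ends (int (card V) - 1 - int k) (int j) =
           x_coeff k 0 * nullity_sum j {}
           + x_coeff k 1 * (\<Sum>s\<in>simple_edges. nullity_sum j {s})
           + x_coeff k 2 * (\<Sum>S\<in>edge_pairs. nullity_sum j S)
           + x_coeff k 2 * (\<Sum>S\<in>triangle_edge_sets. nullity_sum j S)"
proof -
  let ?f = "\<lambda>S. x_coeff k (min (card S) 2) * nullity_sum j S"
  have fin: "finite edge_pairs" "finite triangle_edge_sets"
    unfolding edge_pairs_def triangle_edge_sets_def using finite_simple_edges by auto
  have "tcoeff V E ends (int (card V) - 1 - int k) (int j) =
        (\<Sum>S\<in>Pow simple_edges. if le_two_edges_or_triangle S then ?f S else 0)"
    unfolding tcoeff_eq_sum_term_coeff sum_Pow_E_by_supports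
    using sum_term_coeff_edge_sets_over[OF _ assms] by (intro sum.cong) simp_all
  also have "\<dots> = sum ?f {S\<in>Pow simple_edges. le_two_edges_or_triangle S}"
    by (rule sum.inter_filter[symmetric]) (simp add: finite_simple_edges)
  also have "\<dots> = sum ?f ({{}} \<union> (\<lambda>s. {s}) ` simple_edges \<union> edge_pairs \<union> triangle_edge_sets)"
    unfolding low_rank_supports ..
  also have "\<dots> = ?f {} + (\<Sum>s\<in>simple_edges. ?f {s}) + sum ?f edge_pairs + sum ?f triangle_edge_sets"
  proof -
    let ?U1 = "(\<lambda>s. {s}) ` simple_edges"
    have "card S \<le> 2" if "S \<in> {{}} \<union> ?U1 \<union> edge_pairs" for S
      using that unfolding edge_pairs_def by (elim UnE) auto
    then have "S \<notin> triangle_edge_sets" if "S \<in> {{}} \<union> ?U1 \<union> edge_pairs" for S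
      using that by (fastforce simp: triangle_edge_sets_def)
    then have d3: "({{}} \<union> ?U1 \<union> edge_pairs) \<inter> triangle_edge_sets = {}" by blast
    have "card S \<noteq> 2" if "S \<in> {{}} \<union> ?U1" for S using that by auto
    then have d2: "({{}} \<union> ?U1) \<inter> edge_pairs = {}" unfolding edge_pairs_def by blast
    have d1: "{{}} \<inter> ?U1 = {}" by blast
    have "finite ?U1" using finite_simple_edges by simp
    moreover have "sum ?f ?U1 = (\<Sum>s\<in>simple_edges. ?f {s})" by (simp add: sum.reindex)
    ultimately show ?thesis using fin d1 d2 d3 by (simp add: sum.union_disjoint)
  qed
  also have "sum ?f edge_pairs = x_coeff k 2 * (\<Sum>S\<in>edge_pairs. nullity_sum j S)"
    unfolding sum_distrib_left by (rule sum.cong) (auto simp: edge_pairs_def)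
  also have "sum ?f triangle_edge_sets = x_coeff k 2 * (\<Sum>S\<in>triangle_edge_sets. nullity_sum j S)"
    unfolding sum_distrib_left by (rule sum.cong) (auto simp: triangle_edge_sets_def)
  also have "(\<Sum>s\<in>simple_edges. ?f {s}) = x_coeff k 1 * (\<Sum>s\<in>simple_edges. nullity_sum j {s})"
    by (simp add: sum_distrib_left)
  finally show ?thesis by simp
qed

lemma sum_nullity_sum_singletons:
  "(\<Sum>s\<in>simple_edges. nullity_sum 0 {s}) = int (card simple_edges)"
  "(\<Sum>s\<in>simple_edges. nullity_sum 1 {s}) = int (card multi_edges)"
proof -
  have "(\<Sum>s\<in>simple_edges. nullity_sum 1 {s}) =
             (\<Sum>s\<in>simple_edges. if s \<in> multi_edges then 1 else 0)"
    using nullity_sum_1 by (intro sum.cong refl) simp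
  also have "\<dots> = int (card {s\<in>simple_edges. s \<in> multi_edges})"
    using sum.inter_filter[OF finite_simple_edges, of "\<lambda>_. 1::int"] by simp
  also have "{s\<in>simple_edges. s \<in> multi_edges} = multi_edges" unfolding multi_edges_def by auto
  finally show "(\<Sum>s\<in>simple_edges. nullity_sum 1 {s}) = int (card multi_edges)" .
  show "(\<Sum>s\<in>simple_edges. nullity_sum 0 {s}) = int (card simple_edges)"
    using nullity_sum_0 by simp
qed

lemma card_edge_pairs: "card edge_pairs = card simple_edges choose 2"
  unfolding edge_pairs_def using n_subsets[OF finite_simple_edges] by simp

lemma card_edge_pairs_containing:
  assumes "s \<in> simple_edges"
  shows "card {S\<in>edge_pairs. s \<in> S} = card simple_edges - 1"
proof -
  have "{S\<in>edge_pairs. s \<in> S} = (\<lambda>t. {s, t}) ` (simple_edges - {s})"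
    unfolding edge_pairs_def using assms by (auto simp: card_2_iff doubleton_eq_iff)
  moreover have "inj_on (\<lambda>t. {s, t}) (simple_edges - {s})" by (auto simp: inj_on_def doubleton_eq_iff)
  ultimately show ?thesis
    using assms finite_simple_edges by (simp add: card_image card_Diff_singleton)
qed

lemma sum_nullity_sum_edge_pairs:
  "(\<Sum>S\<in>edge_pairs. nullity_sum 0 S) = int (card simple_edges choose 2)"
  "(\<Sum>S\<in>edge_pairs. nullity_sum 1 S) = int (card multi_edges) * (int (card simple_edges) - 1)"
proof -
  have fin: "finite edge_pairs" "finite multi_edges"
    unfolding edge_pairs_def multi_edges_def using finite_simple_edges by auto
  show "(\<Sum>S\<in>edge_pairs. nullity_sum 0 S) = int (card simple_edges choose 2)"
    using card_edge_pairs by (simp add: nullity_sum_0 edge_pairs_def)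
  have "(\<Sum>S\<in>edge_pairs. nullity_sum 1 S) = int (\<Sum>S\<in>edge_pairs. card (S \<inter> multi_edges))"
    using nullity_sum_1 by (simp add: edge_pairs_def)
  also have "\<dots> = int (\<Sum>s\<in>multi_edges. card simple_edges - 1)"
    unfolding sum_card_Int_eq_sum_card_containing[OF fin]
    using card_edge_pairs_containing by (simp add: multi_edges_def)
  also have "\<dots> = int (card multi_edges) * (int (card simple_edges) - 1)"
  proof (cases "multi_edges = {}")
    case False
    then have "simple_edges \<noteq> {}" unfolding multi_edges_def by auto
    then show ?thesis using finite_simple_edges by (simp add: card_gt_0_iff Suc_le_eq)
  qed simp
  finally show "(\<Sum>S\<in>edge_pairs. nullity_sum 1 S) = int (card multi_edges) * (int (card simple_edges) - 1)" .
qed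

definition vertex_triangles :: "'v set set" where
  "vertex_triangles = {X. X \<subseteq> V \<and> card X = 3 \<and> (\<forall>u\<in>X. \<forall>w\<in>X. u \<noteq> w \<longrightarrow> {u, w} \<in> ends ` E)}"

lemma doubletons_subset_simple_edges:
  assumes "X \<in> vertex_triangles"
  shows "doubletons X \<subseteq> simple_edges"
proof
  fix t assume "t \<in> doubletons X"
  then obtain a b where "t = {a, b}" "a \<noteq> b" "a \<in> X" "b \<in> X"
    unfolding doubletons_def by (auto simp: card_2_iff)
  then show "t \<in> simple_edges" using assms unfolding vertex_triangles_def simple_edges_def by auto
qed

lemma triangle_edge_set_eq_doubletons:
  assumes "S \<in> triangle_edge_sets"
  shows "S = doubletons (\<Union>S)"
proof (rule card_subset_eq)
  have S: "S \<subseteq> simple_edges" "card S = 3" "card (\<Union>S) = 3"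
    using assms unfolding triangle_edge_sets_def by auto
  then have "finite (\<Union>S)" by (intro card_ge_0_finite) simp
  then show "finite (doubletons (\<Union>S))" unfolding doubletons_def by simp
  show "S \<subseteq> doubletons (\<Union>S)"
    using S(1) simple_edge_two_subset unfolding doubletons_def by auto
  show "card S = card (doubletons (\<Union>S))"
    using card_doubletons[OF \<open>finite (\<Union>S)\<close>] S by (simp add: choose_two)
qed

lemma triangle_edge_sets_eq: "triangle_edge_sets = doubletons ` vertex_triangles"
proof
  show "triangle_edge_sets \<subseteq> doubletons ` vertex_triangles"
  proof
    fix S assume S: "S \<in> triangle_edge_sets"
    have "\<Union>S \<in> vertex_triangles"
    proof -
      have S3: "S \<subseteq> simple_edges" "card (\<Union>S) = 3"
        using S unfolding triangle_edge_sets_def by auto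
      then have "\<Union>S \<subseteq> V" using simple_edge_two_subset by blast
      moreover have "{u, w} \<in> ends ` E" if "u \<in> \<Union>S" "w \<in> \<Union>S" "u \<noteq> w" for u w
      proof -
        have "{u, w} \<in> doubletons (\<Union>S)" unfolding doubletons_def using that by auto
        then have "{u, w} \<in> S" using triangle_edge_set_eq_doubletons[OF S] by simp
        then show ?thesis using S3(1) unfolding simple_edges_def by blast
      qed
      ultimately show ?thesis unfolding vertex_triangles_def using S3(2) by blast
    qed
    then show "S \<in> doubletons ` vertex_triangles"
      using triangle_edge_set_eq_doubletons[OF S] by blast
  qed
  show "doubletons ` vertex_triangles \<subseteq> triangle_edge_sets"
  proof
    fix S assume "S \<in> doubletons ` vertex_triangles"
    then obtain X where X: "X \<in> vertex_triangles" "S = doubletons X" by blast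
    then have "card X = 3" unfolding vertex_triangles_def by simp
    then have "finite X" by (intro card_ge_0_finite) simp
    then show "S \<in> triangle_edge_sets"
      using X doubletons_subset_simple_edges[OF X(1)] Union_doubletons[of X] card_doubletons[of X]
        \<open>card X = 3\<close> unfolding triangle_edge_sets_def by (simp add: choose_two)
  qed
qed

lemma inj_on_doubletons: "inj_on doubletons vertex_triangles"
proof (rule inj_onI)
  fix X Y assume XY: "X \<in> vertex_triangles" "Y \<in> vertex_triangles" "doubletons X = doubletons Y"
  then have "2 \<le> card X" "2 \<le> card Y" unfolding vertex_triangles_def by auto
  then show "X = Y" using Union_doubletons XY(3) by metis
qed

lemma card_triangle_edge_sets: "card triangle_edge_sets = ntriangles V E ends"
  unfolding triangle_edge_sets_eq card_image[OF inj_on_doubletons]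
  unfolding ntriangles_def vertex_triangles_def ..

definition apexes :: "'v set \<Rightarrow> 'v set" where
  "apexes s = {x\<in>V - s. \<forall>v\<in>s. {v, x} \<in> simple_edges}"

lemma vertex_triangles_containing:
  assumes "s \<in> simple_edges"
  shows "{X\<in>vertex_triangles. s \<subseteq> X} = (\<lambda>x. insert x s) ` apexes s"
proof -
  obtain u w where s: "s = {u, w}" "u \<noteq> w" "u \<in> V" "w \<in> V"
    using simple_edge_two_subset[OF assms] by (auto simp: card_2_iff)
  show ?thesis
  proof
    show "{X\<in>vertex_triangles. s \<subseteq> X} \<subseteq> (\<lambda>x. insert x s) ` apexes s"
    proof clarify
      fix X assume X: "X \<in> vertex_triangles" "s \<subseteq> X"
      then have "card X = 3" "X \<subseteq> V" unfolding vertex_triangles_def by auto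
      then have "card (X - s) = 1"
        using X(2) s card_Diff_subset[of s X] by (simp add: finite_subset[OF _ finite_V])
      then obtain x where x: "X - s = {x}" by (rule card_1_singletonE)
      then have "x \<in> X" "x \<notin> s" by auto
      have "{v, x} \<in> simple_edges" if "v \<in> s" for v
      proof -
        have "v \<in> X" "v \<noteq> x" using that X(2) \<open>x \<notin> s\<close> by auto
        then show ?thesis
          using X(1) \<open>x \<in> X\<close> unfolding vertex_triangles_def simple_edges_def by blast
      qed
      then have "x \<in> apexes s" unfolding apexes_def using \<open>x \<in> X\<close> \<open>x \<notin> s\<close> \<open>X \<subseteq> V\<close> by blast
      moreover have "X = insert x s" using x X(2) by blast
      ultimately show "X \<in> (\<lambda>x. insert x s) ` apexes s" by blast
    qed
    show "(\<lambda>x. insert x s) ` apexes s \<subseteq> {X\<in>vertex_triangles. s \<subseteq> X}"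
    proof
      fix X assume "X \<in> (\<lambda>x. insert x s) ` apexes s"
      then obtain x where x: "x \<in> apexes s" "X = insert x s" by blast
      then have "x \<in> V" "x \<notin> s" "{u, x} \<in> ends ` E" "{w, x} \<in> ends ` E"
        unfolding apexes_def simple_edges_def using s(1) by auto
      moreover have "{u, w} \<in> ends ` E" using assms s(1) unfolding simple_edges_def by simp
      moreover have "X = {x, u, w}" using x(2) s(1) by simp
      moreover have "{a, b} = {u, w} \<or> {a, b} = {u, x} \<or> {a, b} = {w, x}"
        if "a \<in> X" "b \<in> X" "a \<noteq> b" for a b
        using that \<open>X = {x, u, w}\<close> by (auto simp: insert_commute)
      ultimately have "X \<subseteq> V" "card X = 3" "\<forall>a\<in>X. \<forall>b\<in>X. a \<noteq> b \<longrightarrow> {a, b} \<in> ends ` E"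
        using s by auto
      then show "X \<in> {X\<in>vertex_triangles. s \<subseteq> X}"
        unfolding vertex_triangles_def using x(2) by auto
    qed
  qed
qed

lemma card_triangle_edge_sets_containing:
  assumes "s \<in> simple_edges"
  shows "card {S\<in>triangle_edge_sets. s \<in> S} = card (apexes s)"
proof -
  have "s \<in> doubletons X \<longleftrightarrow> s \<subseteq> X" for X
    using simple_edge_two_subset[OF assms] unfolding doubletons_def by simp
  then have "{S\<in>triangle_edge_sets. s \<in> S} = doubletons ` {X\<in>vertex_triangles. s \<subseteq> X}"
    unfolding triangle_edge_sets_eq by blast
  also have "card \<dots> = card {X\<in>vertex_triangles. s \<subseteq> X}"
    by (rule card_image) (rule inj_on_subset[OF inj_on_doubletons], blast)
  also have "\<dots> = card (apexes s)"
    unfolding vertex_triangles_containing[OF assms] unfolding apexes_def by (rule card_image) (auto simp: inj_on_def)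
  finally show ?thesis .
qed

lemma sum_nullity_sum_triangle_edge_sets:
  "(\<Sum>S\<in>triangle_edge_sets. nullity_sum 0 S) = - int (ntriangles V E ends)"
  "(\<Sum>S\<in>triangle_edge_sets. nullity_sum 1 S) =
     int (ntriangles V E ends) - int (\<Sum>s\<in>multi_edges. card (apexes s))"
proof -
  have fin: "finite triangle_edge_sets" "finite multi_edges"
    unfolding triangle_edge_sets_def multi_edges_def using finite_simple_edges by auto
  show "(\<Sum>S\<in>triangle_edge_sets. nullity_sum 0 S) = - int (ntriangles V E ends)"
    using nullity_sum_0 card_triangle_edge_sets by (simp add: triangle_edge_sets_def)
  have "(\<Sum>S\<in>triangle_edge_sets. nullity_sum 1 S) =
        (\<Sum>S\<in>triangle_edge_sets. 1 - int (card (S \<inter> multi_edges)))"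
    using nullity_sum_1 by (intro sum.cong refl) (simp add: triangle_edge_sets_def)
  also have "\<dots> = int (card triangle_edge_sets) - int (\<Sum>S\<in>triangle_edge_sets. card (S \<inter> multi_edges))"
    by (simp add: sum_subtractf)
  also have "(\<Sum>S\<in>triangle_edge_sets. card (S \<inter> multi_edges)) = (\<Sum>s\<in>multi_edges. card (apexes s))"
    unfolding sum_card_Int_eq_sum_card_containing[OF fin]
    using card_triangle_edge_sets_containing by (simp add: multi_edges_def)
  finally show "(\<Sum>S\<in>triangle_edge_sets. nullity_sum 1 S) =
     int (ntriangles V E ends) - int (\<Sum>s\<in>multi_edges. card (apexes s))"
    using card_triangle_edge_sets by simp
qed

lemma parallel_classes_eq: "parallel_classes E ends = parallel_class ` simple_edges"
  unfolding parallel_classes_def parallel_class_def simple_edges_def by auto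

lemma inj_on_parallel_class: "inj_on parallel_class simple_edges"
  by (rule inj_onI) (auto simp: parallel_class_def simple_edges_def)

lemma npar_eq: "npar E ends = card simple_edges"
  unfolding npar_def parallel_classes_eq using card_image[OF inj_on_parallel_class] .

lemma nontrivial_parallel_classes_eq:
  "{A\<in>parallel_classes E ends. 2 \<le> card A} = parallel_class ` multi_edges"
  unfolding parallel_classes_eq multi_edges_def by auto

lemma npar_nontriv_eq: "npar_nontriv E ends = card multi_edges"
  unfolding npar_nontriv_def nontrivial_parallel_classes_eq
  by (rule card_image[OF inj_on_subset[OF inj_on_parallel_class]]) (auto simp: multi_edges_def)

lemma sum_nontrivial_parallel_classes:
  "(\<Sum>A\<in>{A\<in>parallel_classes E ends. 2 \<le> card A}. g A) = (\<Sum>s\<in>multi_edges. g (parallel_class s))"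
  unfolding nontrivial_parallel_classes_eq
  by (rule sum.reindex_cong[OF inj_on_subset[OF inj_on_parallel_class]]) (auto simp: multi_edges_def)

end

section \<open>Contracting a parallel class\<close>

locale loopless_connected_multigraph_edge = loopless_connected_multigraph +
  fixes u w
  assumes uw_simple_edge: "{u, w} \<in> simple_edges"
begin

abbreviation "uw \<equiv> {u, w}"

lemma uw: "u \<noteq> w" "u \<in> V" "w \<in> V"
  using simple_edge_two_subset[OF uw_simple_edge] by (auto simp: card_insert_if split: if_splits)

abbreviation merged where
  "merged x \<equiv> conn_rel V {uw} id `` {x}"

definition contract_pair where
  "contract_pair t = merged ` t"

lemma pair_graph_uw: "pair_graph V {uw}"
  using pair_graph_subset uw_simple_edge by simp

lemma merged_in_uw: "x \<in> uw \<Longrightarrow> merged x = uw"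
  using pair_graph.isolated_edge_class[OF pair_graph_uw] by simp

lemma merged_outside_uw: "x \<in> V \<Longrightarrow> x \<notin> uw \<Longrightarrow> merged x = {x}"
  using pair_graph.class_uncovered[OF pair_graph_uw] by simp

lemma contract_pair_disjoint:
  assumes "t \<in> simple_edges" "t \<inter> uw = {}"
  shows "contract_pair t = (\<lambda>y. {y}) ` t"
  using assms simple_edge_two_subset merged_outside_uw unfolding contract_pair_def
  by (intro image_cong refl) blast

lemma contract_pair_meeting:
  assumes "t \<in> simple_edges" "t \<noteq> uw" "t \<inter> uw \<noteq> {}"
  obtains z y where "z \<in> uw" "y \<in> V" "y \<notin> uw" "t = {z, y}" "contract_pair t = {uw, {y}}"
proof -
  obtain a b where ab: "t = {a, b}" "a \<noteq> b" "a \<in> V" "b \<in> V"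
    using simple_edge_two_subset[OF assms(1)] by (auto simp: card_2_iff)
  have "\<not> (a \<in> uw \<and> b \<in> uw)"
  proof
    assume "a \<in> uw \<and> b \<in> uw"
    then have "t = uw" using ab uw(1) by auto
    then show False using assms(2) by simp
  qed
  then consider "a \<in> uw" "b \<notin> uw" | "b \<in> uw" "a \<notin> uw" using assms(3) ab(1) by blast
  then show ?thesis
  proof cases
    case 1
    then show ?thesis
      using that[of a b] ab merged_in_uw merged_outside_uw by (simp add: contract_pair_def)
  next
    case 2
    then show ?thesis
      using that[of b a] ab merged_in_uw merged_outside_uw
      by (simp add: contract_pair_def insert_commute)
  qed
qed

lemma uw_in_contract_pair_iff:
  assumes "t \<in> simple_edges" "t \<noteq> uw"
  shows "uw \<in> contract_pair t \<longleftrightarrow> t \<inter> uw \<noteq> {}"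
proof (cases "t \<inter> uw = {}")
  case True
  then show ?thesis using contract_pair_disjoint[OF assms(1)] uw(1) by (auto simp: doubleton_eq_iff)
next
  case False
  then obtain y where "contract_pair t = {uw, {y}}" by (rule contract_pair_meeting[OF assms]) blast
  then show ?thesis using False by simp
qed

text \<open>The edges \<open>{w, x}\<close> that become parallel to \<open>{u, x}\<close> when \<open>{u, w}\<close> is contracted.\<close>

definition redundant_edges :: "'a set set" where
  "redundant_edges = (\<lambda>x. {w, x}) ` apexes uw"

lemma apexes_uw: "x \<in> apexes uw \<longleftrightarrow> x \<in> V \<and> x \<notin> uw \<and> {u, x} \<in> simple_edges \<and> {w, x} \<in> simple_edges"
  unfolding apexes_def by auto

lemma redundant_edges_subset: "redundant_edges \<subseteq> simple_edges - {uw}"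
  unfolding redundant_edges_def using apexes_uw uw by (auto simp: doubleton_eq_iff)

lemma card_redundant_edges: "card redundant_edges = card (apexes uw)"
  unfolding redundant_edges_def
  by (rule card_image, rule inj_onI) (auto simp: apexes_uw doubleton_eq_iff)

lemma contract_pair_image:
  "contract_pair ` (simple_edges - {uw}) = contract_pair ` (simple_edges - {uw} - redundant_edges)"
proof
  show "contract_pair ` (simple_edges - {uw}) \<subseteq> contract_pair ` (simple_edges - {uw} - redundant_edges)"
  proof
    fix X assume "X \<in> contract_pair ` (simple_edges - {uw})"
    then obtain t where t: "t \<in> simple_edges - {uw}" "X = contract_pair t" by blast
    show "X \<in> contract_pair ` (simple_edges - {uw} - redundant_edges)"
    proof (cases "t \<in> redundant_edges")
      case False
      then show ?thesis using t by blast
    next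
      case True
      then obtain x where x: "x \<in> apexes uw" "t = {w, x}" unfolding redundant_edges_def by blast
      then have x': "x \<in> V" "x \<notin> uw" "{u, x} \<in> simple_edges" unfolding apexes_uw by auto
      have "{u, x} \<notin> redundant_edges"
        using x' uw(1) unfolding redundant_edges_def apexes_uw by (auto simp: doubleton_eq_iff)
      moreover have "{u, x} \<noteq> uw" using x' by auto
      ultimately have "{u, x} \<in> simple_edges - {uw} - redundant_edges" using x'(3) by blast
      moreover have "X = contract_pair {u, x}"
        using t(2) x(2) x' merged_in_uw merged_outside_uw by (simp add: contract_pair_def)
      ultimately show ?thesis by (rule rev_image_eqI)
    qed
  qed
qed blast

lemma inj_on_contract_pair: "inj_on contract_pair (simple_edges - {uw} - redundant_edges)"
proof (rule inj_onI)
  fix t t' assume t: "t \<in> simple_edges - {uw} - redundant_edges"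
    and t': "t' \<in> simple_edges - {uw} - redundant_edges" and eq: "contract_pair t = contract_pair t'"
  have meets: "t \<inter> uw \<noteq> {} \<longleftrightarrow> t' \<inter> uw \<noteq> {}"
    using uw_in_contract_pair_iff[of t] uw_in_contract_pair_iff[of t'] t t' eq by simp
  show "t = t'"
  proof (cases "t \<inter> uw = {}")
    case True
    have "\<Union>((\<lambda>y. {y}) ` X) = X" for X :: "'a set" by blast
    then have "\<Union>(contract_pair t) = t" "\<Union>(contract_pair t') = t'"
      using contract_pair_disjoint[of t] contract_pair_disjoint[of t'] t t' meets True by auto
    then show ?thesis using eq by metis
  next
    case False
    have tP: "t \<in> simple_edges" "t \<noteq> uw" "t' \<in> simple_edges" "t' \<noteq> uw"
      and "t' \<inter> uw \<noteq> {}" using t t' False meets by auto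
    obtain z y where zy: "z \<in> uw" "y \<in> V" "y \<notin> uw" "t = {z, y}" "contract_pair t = {uw, {y}}"
      by (rule contract_pair_meeting[OF tP(1,2) False])
    obtain z' y' where zy': "z' \<in> uw" "y' \<in> V" "y' \<notin> uw" "t' = {z', y'}"
        "contract_pair t' = {uw, {y'}}"
      by (rule contract_pair_meeting[OF tP(3,4) \<open>t' \<inter> uw \<noteq> {}\<close>])
    have "{y} \<in> contract_pair t" using zy(5) by simp
    then have "{y} \<in> {uw, {y'}}" using eq zy'(5) by metis
    moreover have "{y} \<noteq> uw" using uw(1) by auto
    ultimately have "y = y'" by blast
    show ?thesis
    proof (rule ccontr)
      assume "t \<noteq> t'"
      then have "{z, z'} = uw" using zy(1,4) zy'(1,4) \<open>y = y'\<close> by auto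
      then have "{u, y} \<in> simple_edges" "{w, y} \<in> simple_edges" "{w, y} \<in> {t, t'}"
        using tP zy(4) zy'(4) \<open>y = y'\<close> uw(1) by (auto simp: doubleton_eq_iff)
      then have "y \<in> apexes uw" unfolding apexes_uw using zy(2,3) by blast
      then have "{w, y} \<in> redundant_edges" unfolding redundant_edges_def by (rule imageI)
      then show False using t t' \<open>{w, y} \<in> {t, t'}\<close> by blast
    qed
  qed
qed

lemma card_apexes_uw_le: "card (apexes uw) \<le> card simple_edges - 1"
proof -
  have "card redundant_edges \<le> card (simple_edges - {uw})"
    using redundant_edges_subset finite_simple_edges by (intro card_mono) auto
  then show ?thesis using card_redundant_edges finite_simple_edges uw_simple_edge by simp
qed

lemma npar_contract_uw:
  "npar (contract_E V E ends (parallel_class uw)) (contract_ends V E ends (parallel_class uw)) =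
     card simple_edges - 1 - card (apexes uw)"
proof -
  have "conn_rel V (parallel_class uw) ends = conn_rel V {uw} id"
  proof -
    have "ends ` parallel_class uw = {uw}"
      using uw_simple_edge unfolding parallel_class_def simple_edges_def by auto
    then show ?thesis using conn_rel_ends_image by metis
  qed
  then have "contract_ends V E ends (parallel_class uw) = (\<lambda>e. contract_pair (ends e))"
    unfolding contract_ends_def contract_pair_def by simp
  moreover have "ends ` (E - parallel_class uw) = simple_edges - {uw}"
    unfolding parallel_class_def simple_edges_def by auto
  ultimately have "npar (contract_E V E ends (parallel_class uw)) (contract_ends V E ends (parallel_class uw))
      = card (contract_pair ` (simple_edges - {uw}))"
    unfolding contract_E_def using finite_E by (simp add: npar_eq_card_image image_image[symmetric])
  also have "\<dots> = card (simple_edges - {uw} - redundant_edges)"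
    unfolding contract_pair_image by (rule card_image[OF inj_on_contract_pair])
  also have "\<dots> = card simple_edges - 1 - card (apexes uw)"
    using redundant_edges_subset finite_simple_edges uw_simple_edge
    by (simp add: card_Diff_subset card_redundant_edges finite_subset)
  finally show ?thesis .
qed

end

context loopless_connected_multigraph
begin

lemma npar_contract_parallel_class:
  assumes "s \<in> simple_edges"
  shows "int (npar (contract_E V E ends (parallel_class s)) (contract_ends V E ends (parallel_class s))) =
           int (card simple_edges) - 1 - int (card (apexes s))"
proof -
  obtain u w where "s = {u, w}"
    using simple_edge_two_subset[OF assms] by (auto simp: card_2_iff)
  then interpret loopless_connected_multigraph_edge V E ends u w
    using assms by unfold_locales simp
  have "1 \<le> card simple_edges" using assms finite_simple_edges by (auto simp: Suc_le_eq card_gt_0_iff)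
  then show ?thesis using npar_contract_uw card_apexes_uw_le \<open>s = {u, w}\<close> by simp
qed

lemma sum_npar_contract_nontrivial_parallel_classes:
  "(\<Sum>A\<in>{A\<in>parallel_classes E ends. 2 \<le> card A}.
      int (npar (contract_E V E ends A) (contract_ends V E ends A))) =
   int (card multi_edges) * (int (card simple_edges) - 1) - int (\<Sum>s\<in>multi_edges. card (apexes s))"
  unfolding sum_nontrivial_parallel_classes
  using npar_contract_parallel_class by (simp add: multi_edges_def sum_subtractf)

lemma two_le_card_V:
  assumes "simple_edges \<noteq> {}"
  shows "2 \<le> card V"
proof -
  obtain s where "s \<in> simple_edges" using assms by blast
  then have "s \<subseteq> V" "card s = 2" using simple_edge_two_subset by auto
  then show ?thesis using card_mono[OF finite_V] by metis
qed

lemma x_coeff_values: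
  "x_coeff 0 0 = 1" "x_coeff 0 1 = 0" "x_coeff 0 2 = 0"
  "x_coeff 1 0 = 1 - int (card V)" "x_coeff 1 1 = 1" "x_coeff 1 2 = 0"
  "x_coeff 2 0 = int ((card V - 1) choose 2)" "x_coeff 2 1 = - int (card V - 2)" "x_coeff 2 2 = 1"
  using card_V_pos by (simp_all add: x_coeff_def)

lemma nullity_sum_empty: "nullity_sum 0 {} = 1" "nullity_sum 1 {} = 0"
  using nullity_sum_0[of "{}"] nullity_sum_1[of "{}"] by simp_all

lemma tcoeff_n_minus_1_0: "tcoeff V E ends (int (card V) - 1) 0 = 1"
  using tcoeff_expansion[of 0 0] x_coeff_values nullity_sum_empty by simp

lemma tcoeff_n_minus_2_0:
  "tcoeff V E ends (int (card V) - 2) 0 = int (card simple_edges) - int (card V) + 1"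
  using tcoeff_expansion[of 1 0] x_coeff_values nullity_sum_empty sum_nullity_sum_singletons by simp

lemma tcoeff_n_minus_3_0:
  "tcoeff V E ends (int (card V) - 3) 0 =
     int ((card V - 1) choose 2) - (int (card V) - 2) * int (card simple_edges)
     + int (card simple_edges choose 2) - int (ntriangles V E ends)"
proof -
  have "int (card V - 2) * int (card simple_edges) = (int (card V) - 2) * int (card simple_edges)"
    using two_le_card_V by (cases "simple_edges = {}") auto
  then show ?thesis
    using tcoeff_expansion[of 2 0] x_coeff_values nullity_sum_empty sum_nullity_sum_singletons
      sum_nullity_sum_edge_pairs sum_nullity_sum_triangle_edge_sets by simp
qed

lemma tcoeff_n_minus_2_1: "tcoeff V E ends (int (card V) - 2) 1 = int (card multi_edges)"
  using tcoeff_expansion[of 1 1] x_coeff_values nullity_sum_empty sum_nullity_sum_singletons by simp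

lemma tcoeff_n_minus_3_1:
  "tcoeff V E ends (int (card V) - 3) 1 =
     - int (card multi_edges) * (int (card V) - 2)
     + (\<Sum>A\<in>{A\<in>parallel_classes E ends. 2 \<le> card A}.
          int (npar (contract_E V E ends A) (contract_ends V E ends A)))
     + int (ntriangles V E ends)"
proof -
  have "int (card V - 2) * int (card multi_edges) = (int (card V) - 2) * int (card multi_edges)"
  proof (cases "multi_edges = {}")
    case False
    then have "simple_edges \<noteq> {}" unfolding multi_edges_def by auto
    then show ?thesis using two_le_card_V by simp
  qed simp
  then show ?thesis
    using tcoeff_expansion[of 2 1] x_coeff_values nullity_sum_empty sum_nullity_sum_singletons
      sum_nullity_sum_edge_pairs sum_nullity_sum_triangle_edge_sets
      sum_npar_contract_nontrivial_parallel_classes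
    by (simp add: algebra_simps)
qed

end

theorem theorem2:
  fixes V :: "'v set" and E :: "'e set" and ends :: "'e \<Rightarrow> 'v set"
  assumes "multigraph V E ends"
    and "connected_graph V E ends"
    and "loopless E ends"
    and "bridgeless V E ends"
  defines "n \<equiv> int (card V)"
    and "p \<equiv> npar E ends"
    and "ps \<equiv> npar_nontriv E ends"
    and "\<Delta> \<equiv> ntriangles V E ends"
  shows "tcoeff V E ends (n - 1) 0 = 1 \<and>
         tcoeff V E ends (n - 2) 0 = int p - n + 1 \<and>
         tcoeff V E ends (n - 3) 0 =
           int ((card V - 1) choose 2) - (n - 2) * int p + int (p choose 2) - int \<Delta> \<and>
         tcoeff V E ends (n - 2) 1 = int ps \<and>
         tcoeff V E ends (n - 3) 1 =
           - int ps * (n - 2)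
           + (\<Sum>A\<in>{A \<in> parallel_classes E ends. card A \<ge> 2}.
                int (npar (contract_E V E ends A) (contract_ends V E ends A)))
           + int \<Delta>"
proof -
  interpret loopless_connected_multigraph V E ends
    using assms(1-3) by unfold_locales
  show ?thesis
    unfolding n_def p_def ps_def \<Delta>_def npar_eq npar_nontriv_eq
    using tcoeff_n_minus_1_0 tcoeff_n_minus_2_0 tcoeff_n_minus_3_0 tcoeff_n_minus_2_1
      tcoeff_n_minus_3_1
    by simp
qed

end
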